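(* Let $\alpha=(\alpha_1,\dots,\alpha_n)\in\mathbb{R}^n$ with $\alpha_1,\dots,\alpha_n,1$ linearly independent over $\mathbb{Q}$, $\ell=n+1$, fix $m\in\mathbb{Z}^+$, and let $\beta_\ell$ be the last entry of $A_m(\alpha_1,\dots,\alpha_n,1)^\top$. Define the norm $G_m$ on $\mathbb{R}^\ell$ by $$G_m(x_1,\dots,x_\ell)=\max\Big(|x_1|,\dots,|x_\ell|,\tfrac{m}{|\beta_\ell|}\,|\alpha_1x_1+\cdots+\alpha_nx_n+x_\ell|\Big).$$ Let $\mu_1\le\cdots\le\mu_\ell$ be the successive minima of the lattice $\mathbb{Z}^\ell$ with respect to $G_m$. Then $\mu_\ell\ge m$.
   Context: For $r=(r_1,\dots,r_\ell)\in\mathbb{Z}^\ell$, $\xi(r)=r_1\alpha_1+\cdots+r_n\alpha_n+r_\ell$; $\|\cdot\|_\infty$ is the maximum absolute value of entries. $A_m$ (Minkowski's algorithm) is the nonsingular integral $\ell\times\ell$ matrix with rows $w_1,\dots,w_\ell$ chosen successively: $w_i$ is the vector $w\in\mathbb{Z}^\ell$ with $\|w\|_\infty\le m$, linearly independent of $w_1,\dots,w_{i-1}$, minimizing $|\xi(w)|$, normalized so that its first nonzero entry is positive; $\beta_i=\xi(w_i)$. For a norm $F$ on $\mathbb{R}^\ell$ and a full lattice $\Lambda$, the $j$-th successive minimum $\mu_j$ is the infimum of $\mu>0$ such that there are $j$ linearly independent $v\in\Lambda$ with $F(v)\le\mu$. *)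

theory Defs
  imports Complex_Main
begin

text \<open>Conventions: \<open>\<ell> = n+1\<close>; vectors in \<open>\<real>^\<ell>\<close> / \<open>\<int>^\<ell>\<close> are functions on \<open>nat\<close>
  whose coordinates \<open>0..n\<close> are the entries \<open>x_1..x_\<ell>\<close> (coordinate \<open>n\<close> is the last one);
  integer vectors are required to vanish at indices \<open>> n\<close>.
  \<open>\<alpha> i\<close> for \<open>i < n\<close> is \<open>\<alpha>_(i+1)\<close>.\<close>

definition Q_lin_indep_alpha :: "nat \<Rightarrow> (nat \<Rightarrow> real) \<Rightarrow> bool" where
  "Q_lin_indep_alpha n \<alpha> \<longleftrightarrow>
     (\<forall>q :: nat \<Rightarrow> rat. (\<Sum>i<n. of_rat (q i) * \<alpha> i) + of_rat (q n) = 0 \<longrightarrow> (\<forall>i\<le>n. q i = 0))"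

definition zvecs :: "nat \<Rightarrow> (nat \<Rightarrow> int) set" where
  "zvecs n = {r. \<forall>i>n. r i = 0}"

definition xi :: "nat \<Rightarrow> (nat \<Rightarrow> real) \<Rightarrow> (nat \<Rightarrow> real) \<Rightarrow> real" where
  "xi n \<alpha> x = (\<Sum>i<n. x i * \<alpha> i) + x n"

definition sup_norm :: "nat \<Rightarrow> (nat \<Rightarrow> real) \<Rightarrow> real" where
  "sup_norm n x = Max ((\<lambda>i. \<bar>x i\<bar>) ` {..n})"

definition rvec :: "(nat \<Rightarrow> int) \<Rightarrow> (nat \<Rightarrow> real)" where
  "rvec r = (\<lambda>i. real_of_int (r i))"

text \<open>Linear independence (over \<open>\<real>\<close>, equivalently over \<open>\<rat>\<close>) of a finite family of integer vectors in \<open>\<int>^\<ell>\<close>.\<close>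
definition lin_indep :: "nat \<Rightarrow> (nat \<Rightarrow> int) list \<Rightarrow> bool" where
  "lin_indep n vs \<longleftrightarrow>
     (\<forall>c :: nat \<Rightarrow> real. (\<forall>j\<le>n. (\<Sum>k<length vs. c k * real_of_int ((vs ! k) j)) = 0)
        \<longrightarrow> (\<forall>k<length vs. c k = 0))"

definition first_nonzero_pos :: "nat \<Rightarrow> (nat \<Rightarrow> int) \<Rightarrow> bool" where
  "first_nonzero_pos n w \<longleftrightarrow> (\<exists>j\<le>n. w j > 0 \<and> (\<forall>i<j. w i = 0))"

text \<open>One step of Minkowski's algorithm: \<open>w\<close> is an admissible next row after rows \<open>ws\<close>.\<close>
definition mink_next :: "nat \<Rightarrow> (nat \<Rightarrow> real) \<Rightarrow> nat \<Rightarrow> (nat \<Rightarrow> int) list \<Rightarrow> (nat \<Rightarrow> int) \<Rightarrow> bool" where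
  "mink_next n \<alpha> m ws w \<longleftrightarrow>
     w \<in> zvecs n \<and> sup_norm n (rvec w) \<le> real m \<and> lin_indep n (ws @ [w]) \<and> first_nonzero_pos n w \<and>
     (\<forall>v \<in> zvecs n. sup_norm n (rvec v) \<le> real m \<longrightarrow> lin_indep n (ws @ [v]) \<longrightarrow>
        \<bar>xi n \<alpha> (rvec w)\<bar> \<le> \<bar>xi n \<alpha> (rvec v)\<bar>)"

text \<open>The first \<open>i\<close> rows \<open>w_1,...,w_i\<close> of \<open>A_m\<close>.\<close>
fun mink_rows :: "nat \<Rightarrow> (nat \<Rightarrow> real) \<Rightarrow> nat \<Rightarrow> nat \<Rightarrow> (nat \<Rightarrow> int) list" where
  "mink_rows n \<alpha> m 0 = []"
| "mink_rows n \<alpha> m (Suc i) =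
     (let ws = mink_rows n \<alpha> m i in ws @ [SOME w. mink_next n \<alpha> m ws w])"

text \<open>\<open>\<beta>_i = \<xi>(w_i)\<close>, 1-based index \<open>i\<close>.\<close>
definition mink_beta :: "nat \<Rightarrow> (nat \<Rightarrow> real) \<Rightarrow> nat \<Rightarrow> nat \<Rightarrow> real" where
  "mink_beta n \<alpha> m i = xi n \<alpha> (rvec (mink_rows n \<alpha> m (n+1) ! (i - 1)))"

definition G_norm :: "nat \<Rightarrow> (nat \<Rightarrow> real) \<Rightarrow> nat \<Rightarrow> (nat \<Rightarrow> real) \<Rightarrow> real" where
  "G_norm n \<alpha> m x =
     max (sup_norm n x) (real m / \<bar>mink_beta n \<alpha> m (n+1)\<bar> * \<bar>xi n \<alpha> x\<bar>)"

definition succ_min :: "nat \<Rightarrow> ((nat \<Rightarrow> real) \<Rightarrow> real) \<Rightarrow> nat \<Rightarrow> real" where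
  "succ_min n F j = Inf {\<mu>. \<mu> > 0 \<and> (\<exists>vs. length vs = j \<and> set vs \<subseteq> zvecs n \<and> lin_indep n vs \<and>
                                     (\<forall>v\<in>set vs. F (rvec v) \<le> \<mu>))}"

end

theory Submission
  imports Defs "HOL-Library.Function_Algebras"
begin

text \<open>Let \<open>w\<^sub>1, \<dots>, w\<^sub>\<ell>\<close> be the rows of \<open>A\<^sub>m\<close>. By the exchange lemma, any \<open>\<ell>\<close> linearly
  independent integer vectors contain one, \<open>u\<close>, that is independent of \<open>w\<^sub>1, \<dots>, w\<^sub>n\<close>. Either
  \<open>\<parallel>u\<parallel>\<^sub>\<infinity> > m\<close>, or \<open>u\<close> was a competitor of \<open>w\<^sub>\<ell>\<close> in the last step of the algorithm, so that
  \<open>|\<xi>(u)| \<ge> |\<beta>\<^sub>\<ell>|\<close>; in both cases \<open>G\<^sub>m(u) \<ge> m\<close>, hence \<open>\<mu>\<^sub>\<ell> \<ge> m\<close>. Here \<open>\<beta>\<^sub>\<ell> \<noteq> 0\<close> because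
  \<open>w\<^sub>\<ell> \<noteq> 0\<close> and \<open>\<alpha>\<^sub>1, \<dots>, \<alpha>\<^sub>n, 1\<close> are linearly independent over \<open>\<rat>\<close>. Since the rows are
  picked by Hilbert choice, one also checks that every step of the algorithm has a solution:
  there are finitely many candidates, some unit vector is one, and a minimiser can be
  normalised by a sign change.\<close>

lemma (in vector_space) nth_independent_iff:
  "(\<forall>c. (\<Sum>k<length xs. c k *s xs ! k) = 0 \<longrightarrow> (\<forall>k<length xs. c k = 0))
     \<longleftrightarrow> distinct xs \<and> independent (set xs)"
proof
  assume indep: "\<forall>c. (\<Sum>k<length xs. c k *s xs ! k) = 0 \<longrightarrow> (\<forall>k<length xs. c k = 0)"
  have dist: "distinct xs"
  proof (rule ccontr)
    assume "\<not> distinct xs"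
    then obtain i j where ij: "i < length xs" "j < length xs" "i \<noteq> j" "xs ! i = xs ! j"
      by (auto simp: distinct_conv_nth)
    define c where "c = (\<lambda>k. if k = i then 1 else if k = j then - 1 else 0 :: 'a)"
    have "(\<Sum>k<length xs. c k *s xs ! k) = (\<Sum>k\<in>{i, j}. c k *s xs ! k)"
      by (rule sum.mono_neutral_right) (use ij in \<open>auto simp: c_def\<close>)
    also have "\<dots> = 0"
      using ij by (simp add: c_def)
    finally show False
      using indep ij by (auto simp: c_def dest!: spec[of _ c])
  qed
  have "independent (set xs)"
  proof (rule independent_if_scalars_zero)
    fix f x assume sum0: "(\<Sum>x\<in>set xs. f x *s x) = 0" and "x \<in> set xs"
    have "(\<Sum>k<length xs. f (xs ! k) *s xs ! k) = 0"
      using sum0 sum.reindex_bij_betw[OF bij_betw_nth[OF dist refl refl], of "\<lambda>x. f x *s x"] by simp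
    with indep \<open>x \<in> set xs\<close> show "f x = 0"
      by (auto simp: in_set_conv_nth)
  qed simp
  with dist show "distinct xs \<and> independent (set xs)" ..
next
  assume "distinct xs \<and> independent (set xs)"
  then have dist: "distinct xs" and indep: "independent (set xs)" by auto
  have bij: "bij_betw (nth xs) {..<length xs} (set xs)"
    using bij_betw_nth[OF dist refl refl] .
  show "\<forall>c. (\<Sum>k<length xs. c k *s xs ! k) = 0 \<longrightarrow> (\<forall>k<length xs. c k = 0)"
  proof (intro allI impI)
    fix c k assume sum0: "(\<Sum>k<length xs. c k *s xs ! k) = 0" and k: "k < length xs"
    define u where "u = c \<circ> the_inv_into {..<length xs} (nth xs)"
    have u_nth: "u (xs ! i) = c i" if "i < length xs" for i
      using that bij by (simp add: u_def the_inv_into_f_f bij_betw_def)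
    have "(\<Sum>v\<in>set xs. u v *s v) = 0"
      using sum0 sum.reindex_bij_betw[OF bij, of "\<lambda>v. u v *s v"] by (simp add: u_nth)
    then have "\<forall>v\<in>set xs. u v = 0"
      using indep dependent_finite by auto
    then show "c k = 0"
      using k u_nth by auto
  qed
qed

lemma sum_apply: "(\<Sum>x\<in>A. f x) i = (\<Sum>x\<in>A. f x i)"
  by (induction A rule: infinite_finite_induct) auto

definition scale_fun :: "'a::times \<Rightarrow> ('b \<Rightarrow> 'a) \<Rightarrow> 'b \<Rightarrow> 'a" where
  "scale_fun c f = (\<lambda>i. c * f i)"

interpretation fun_vs: vector_space "scale_fun :: 'a::field \<Rightarrow> ('b \<Rightarrow> 'a) \<Rightarrow> 'b \<Rightarrow> 'a"
  by unfold_locales (auto simp: scale_fun_def fun_eq_iff algebra_simps)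

text \<open>\<^const>\<open>lin_indep\<close> only sees the coordinates \<open>0..n\<close>, so integer vectors enter the
  vector space with all other coordinates cut off.\<close>
definition coord_vec :: "nat \<Rightarrow> (nat \<Rightarrow> int) \<Rightarrow> nat \<Rightarrow> real" where
  "coord_vec n v = (\<lambda>i. if i \<le> n then real_of_int (v i) else 0)"

lemma lin_indep_iff_independent:
  "lin_indep n vs \<longleftrightarrow>
     distinct (map (coord_vec n) vs) \<and> fun_vs.independent (coord_vec n ` set vs)"
proof -
  have "(\<Sum>k<length vs. scale_fun (c k) (coord_vec n (vs ! k))) =
        (\<lambda>j. if j \<le> n then \<Sum>k<length vs. c k * real_of_int ((vs ! k) j) else 0)" for c
    by (simp add: fun_eq_iff sum_apply scale_fun_def coord_vec_def)
  then have "(\<Sum>k<length vs. scale_fun (c k) (coord_vec n (vs ! k))) = 0 \<longleftrightarrow>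
      (\<forall>j\<le>n. (\<Sum>k<length vs. c k * real_of_int ((vs ! k) j)) = 0)" for c
    by (force simp: fun_eq_iff)
  then show ?thesis
    using fun_vs.nth_independent_iff[of "map (coord_vec n) vs"] by (simp add: lin_indep_def)
qed

lemma lin_indep_snoc_iff:
  "lin_indep n (ws @ [v]) \<longleftrightarrow>
     lin_indep n ws \<and> coord_vec n v \<notin> fun_vs.span (coord_vec n ` set ws)"
proof (cases "coord_vec n v \<in> coord_vec n ` set ws")
  case True
  then show ?thesis
    using fun_vs.span_base[of "coord_vec n v"] by (auto simp: lin_indep_iff_independent)
next
  case False
  then show ?thesis
    by (simp add: lin_indep_iff_independent fun_vs.independent_insert)
qed

lemma lin_indep_extend:
  assumes ws: "lin_indep n ws" and us: "lin_indep n us" and len: "length ws < length us"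
  shows "\<exists>u\<in>set us. lin_indep n (ws @ [u])"
proof (rule ccontr)
  let ?P = "coord_vec n"
  assume "\<not> ?thesis"
  with ws have in_span: "?P ` set us \<subseteq> fun_vs.span (?P ` set ws)"
    by (auto simp: lin_indep_snoc_iff)
  have "card (?P ` set us) \<le> card (?P ` set ws)"
    using fun_vs.independent_span_bound[OF _ _ in_span] us by (simp add: lin_indep_iff_independent)
  also have "\<dots> \<le> length ws"
    by (metis card_image_le card_length List.finite_set order_trans)
  finally show False
    using us len distinct_card[of "map ?P us"] by (simp add: lin_indep_iff_independent)
qed

lemma lin_indep_nonzero:
  assumes "lin_indep n vs" and "v \<in> set vs"
  shows "\<exists>j\<le>n. v j \<noteq> 0"
proof (rule ccontr)
  assume "\<not> ?thesis"
  then have "coord_vec n v = 0"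
    by (auto simp: coord_vec_def fun_eq_iff)
  with assms(2) have "0 \<in> coord_vec n ` set vs"
    by (metis image_eqI)
  then have "fun_vs.dependent (coord_vec n ` set vs)"
    by (rule fun_vs.dependent_zero)
  with assms(1) show False
    by (simp add: lin_indep_iff_independent)
qed

lemma lin_indep_snoc_uminus:
  assumes "lin_indep n (ws @ [v])"
  shows "lin_indep n (ws @ [\<lambda>i. - v i])"
proof -
  have neg: "coord_vec n (\<lambda>i. - v i) = - coord_vec n v"
    by (auto simp: coord_vec_def fun_eq_iff)
  show ?thesis
    using assms fun_vs.span_neg[of "- coord_vec n v"] by (auto simp: lin_indep_snoc_iff neg)
qed

lemma sup_norm_le_iff: "sup_norm n x \<le> b \<longleftrightarrow> (\<forall>i\<le>n. \<bar>x i\<bar> \<le> b)"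
  unfolding sup_norm_def by (subst Max_le_iff) auto

definition unit_vec :: "nat \<Rightarrow> nat \<Rightarrow> int" where
  "unit_vec j = (\<lambda>i. if i = j then 1 else 0)"

definition unit_vecs :: "nat \<Rightarrow> (nat \<Rightarrow> int) list" where
  "unit_vecs n = map unit_vec [0..<Suc n]"

lemma length_unit_vecs [simp]: "length (unit_vecs n) = Suc n"
  by (simp add: unit_vecs_def)

lemma lin_indep_unit_vecs: "lin_indep n (unit_vecs n)"
  unfolding lin_indep_def
proof (intro allI impI)
  fix c k
  assume sum0: "\<forall>j\<le>n. (\<Sum>k<length (unit_vecs n). c k * real_of_int ((unit_vecs n ! k) j)) = 0"
    and k: "k < length (unit_vecs n)"
  have "(\<Sum>i<length (unit_vecs n). c i * real_of_int ((unit_vecs n ! i) k)) =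
        (\<Sum>i\<in>{k}. c i * real_of_int ((unit_vecs n ! i) k))"
    by (rule sum.mono_neutral_right)
      (use k in \<open>auto simp: unit_vecs_def unit_vec_def simp del: upt_Suc\<close>)
  also have "\<dots> = c k"
    using k by (simp add: unit_vecs_def unit_vec_def del: upt_Suc)
  finally show "c k = 0"
    using sum0 k by simp
qed

lemma unit_vecs_bounded:
  assumes "v \<in> set (unit_vecs n)"
  shows "v \<in> zvecs n" and "sup_norm n (rvec v) \<le> 1"
  using assms by (auto simp: unit_vecs_def unit_vec_def zvecs_def rvec_def sup_norm_le_iff)

definition mink_candidate :: "nat \<Rightarrow> nat \<Rightarrow> (nat \<Rightarrow> int) list \<Rightarrow> (nat \<Rightarrow> int) \<Rightarrow> bool" where
  "mink_candidate n m ws v \<longleftrightarrow>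
     v \<in> zvecs n \<and> sup_norm n (rvec v) \<le> real m \<and> lin_indep n (ws @ [v])"

lemma mink_next_iff:
  "mink_next n \<alpha> m ws w \<longleftrightarrow>
     mink_candidate n m ws w \<and> first_nonzero_pos n w \<and>
     (\<forall>v. mink_candidate n m ws v \<longrightarrow> \<bar>xi n \<alpha> (rvec w)\<bar> \<le> \<bar>xi n \<alpha> (rvec v)\<bar>)"
  by (auto simp: mink_next_def mink_candidate_def)

lemma finite_mink_candidates: "finite {v. mink_candidate n m ws v}"
proof (rule finite_subset)
  show "{v. mink_candidate n m ws v} \<subseteq>
      {f. \<forall>i. (i \<in> {..n} \<longrightarrow> f i \<in> {- int m..int m}) \<and> (i \<notin> {..n} \<longrightarrow> f i = 0)}"
    by (force simp: mink_candidate_def zvecs_def sup_norm_le_iff rvec_def abs_le_iff)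
  show "finite {f. \<forall>i. (i \<in> {..n} \<longrightarrow> f i \<in> {- int m..int m}) \<and> (i \<notin> {..n} \<longrightarrow> f i = 0)}"
    by (rule finite_set_of_finite_funs) simp_all
qed

lemma mink_candidate_uminus:
  "mink_candidate n m ws v \<Longrightarrow> mink_candidate n m ws (\<lambda>i. - v i)"
  by (simp add: mink_candidate_def zvecs_def sup_norm_def rvec_def lin_indep_snoc_uminus)

lemma xi_rvec_uminus: "xi n \<alpha> (rvec (\<lambda>i. - v i)) = - xi n \<alpha> (rvec v)"
  by (simp add: xi_def rvec_def sum_negf)

lemma first_nonzero_pos_or_uminus:
  assumes "j \<le> n" and "v j \<noteq> 0"
  shows "first_nonzero_pos n v \<or> first_nonzero_pos n (\<lambda>i. - v i)"
proof -
  define j0 where "j0 = (LEAST j. v j \<noteq> 0)"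
  have nz: "v j0 \<noteq> 0" and le: "j0 \<le> n" and zero: "\<forall>i<j0. v i = 0"
    using assms LeastI[of "\<lambda>j. v j \<noteq> 0" j] Least_le[of "\<lambda>j. v j \<noteq> 0" j] not_less_Least
    unfolding j0_def by fastforce+
  show ?thesis
  proof (cases "v j0 > 0")
    case True
    with le zero show ?thesis
      unfolding first_nonzero_pos_def by blast
  next
    case False
    with nz have "- v j0 > 0" by simp
    with le zero show ?thesis
      unfolding first_nonzero_pos_def by auto
  qed
qed

lemma mink_next_exists:
  assumes ws: "lin_indep n ws" and len: "length ws \<le> n" and m: "m \<ge> 1"
  shows "\<exists>w. mink_next n \<alpha> m ws w"
proof -
  obtain u where "u \<in> set (unit_vecs n)" and "lin_indep n (ws @ [u])"
    using lin_indep_extend[OF ws lin_indep_unit_vecs] len by auto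
  then have "mink_candidate n m ws u"
    using unit_vecs_bounded m by (force simp: mink_candidate_def)
  then obtain v where "is_arg_min (\<lambda>v. \<bar>xi n \<alpha> (rvec v)\<bar>) (mink_candidate n m ws) v"
    using ex_is_arg_min_if_finite[OF finite_mink_candidates, of n m ws "\<lambda>v. \<bar>xi n \<alpha> (rvec v)\<bar>"]
    by auto
  then have cand: "mink_candidate n m ws v"
    and min: "\<And>x. mink_candidate n m ws x \<Longrightarrow> \<bar>xi n \<alpha> (rvec v)\<bar> \<le> \<bar>xi n \<alpha> (rvec x)\<bar>"
    by (auto simp: is_arg_min_linorder)
  obtain j where "j \<le> n" and "v j \<noteq> 0"
    using cand lin_indep_nonzero by (fastforce simp: mink_candidate_def)
  then consider "first_nonzero_pos n v" | "first_nonzero_pos n (\<lambda>i. - v i)"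
    using first_nonzero_pos_or_uminus by blast
  then show ?thesis
  proof cases
    case 1
    with cand min show ?thesis
      by (auto simp: mink_next_iff)
  next
    case 2
    with mink_candidate_uminus[OF cand] min show ?thesis
      by (intro exI[of _ "\<lambda>i. - v i"]) (simp add: mink_next_iff xi_rvec_uminus)
  qed
qed

lemma mink_next_some:
  "lin_indep n ws \<Longrightarrow> length ws \<le> n \<Longrightarrow> m \<ge> 1 \<Longrightarrow>
     mink_next n \<alpha> m ws (SOME w. mink_next n \<alpha> m ws w)"
  by (rule someI_ex[where P = "mink_next n \<alpha> m ws"]) (rule mink_next_exists)

lemma mink_rows_lin_indep:
  assumes "m \<ge> 1" and "i \<le> n + 1"
  shows "length (mink_rows n \<alpha> m i) = i \<and> lin_indep n (mink_rows n \<alpha> m i)"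
  using assms(2)
proof (induction i)
  case 0
  then show ?case by (simp add: lin_indep_def)
next
  case (Suc i)
  let ?ws = "mink_rows n \<alpha> m i"
  have "mink_next n \<alpha> m ?ws (SOME w. mink_next n \<alpha> m ?ws w)"
    using Suc assms(1) by (intro mink_next_some) auto
  then have "lin_indep n (?ws @ [SOME w. mink_next n \<alpha> m ?ws w])"
    unfolding mink_next_def by blast
  then show ?case
    using Suc by (simp add: Let_def)
qed

lemma mink_beta_last:
  assumes "m \<ge> 1"
  obtains w where "mink_next n \<alpha> m (mink_rows n \<alpha> m n) w"
    and "mink_beta n \<alpha> m (n + 1) = xi n \<alpha> (rvec w)"
proof
  let ?ws = "mink_rows n \<alpha> m n"
  have ws: "length ?ws = n" "lin_indep n ?ws"
    using mink_rows_lin_indep[OF assms, of n n \<alpha>] by auto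
  then show "mink_next n \<alpha> m ?ws (SOME w. mink_next n \<alpha> m ?ws w)"
    using mink_next_some assms by simp
  show "mink_beta n \<alpha> m (n + 1) = xi n \<alpha> (rvec (SOME w. mink_next n \<alpha> m ?ws w))"
    using ws by (simp add: mink_beta_def Let_def nth_append)
qed

lemma xi_rvec_nonzero:
  assumes "Q_lin_indep_alpha n \<alpha>" and "j \<le> n" and "w j \<noteq> 0"
  shows "xi n \<alpha> (rvec w) \<noteq> 0"
proof
  define q :: "nat \<Rightarrow> rat" where "q i = of_int (w i)" for i
  assume "xi n \<alpha> (rvec w) = 0"
  then have "(\<Sum>i<n. of_rat (q i) * \<alpha> i) + of_rat (q n) = 0"
    by (simp add: xi_def rvec_def q_def)
  then have "\<forall>i\<le>n. q i = 0"
    using assms(1) unfolding Q_lin_indep_alpha_def by blast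
  with assms(2,3) show False
    by (simp add: q_def)
qed

lemma mink_next_completion_ge:
  assumes w: "mink_next n \<alpha> m ws w" and nz: "xi n \<alpha> (rvec w) \<noteq> 0"
    and u: "u \<in> zvecs n" "lin_indep n (ws @ [u])"
  shows "real m \<le> max (sup_norm n (rvec u)) (real m / \<bar>xi n \<alpha> (rvec w)\<bar> * \<bar>xi n \<alpha> (rvec u)\<bar>)"
proof (cases "sup_norm n (rvec u) \<le> real m")
  case True
  with w u have le: "\<bar>xi n \<alpha> (rvec w)\<bar> \<le> \<bar>xi n \<alpha> (rvec u)\<bar>"
    unfolding mink_next_iff mink_candidate_def by blast
  from nz have "real m = real m / \<bar>xi n \<alpha> (rvec w)\<bar> * \<bar>xi n \<alpha> (rvec w)\<bar>"
    by simp
  also have "\<dots> \<le> real m / \<bar>xi n \<alpha> (rvec w)\<bar> * \<bar>xi n \<alpha> (rvec u)\<bar>"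
    using le by (intro mult_left_mono) simp_all
  finally show ?thesis
    by simp
qed simp

lemma succ_min_top_ge:
  assumes "\<And>vs. length vs = n + 1 \<Longrightarrow> set vs \<subseteq> zvecs n \<Longrightarrow> lin_indep n vs \<Longrightarrow>
      \<exists>v\<in>set vs. b \<le> F (rvec v)"
  shows "b \<le> succ_min n F (n + 1)"
proof -
  let ?S = "{\<mu>. \<mu> > 0 \<and> (\<exists>vs. length vs = n + 1 \<and> set vs \<subseteq> zvecs n \<and> lin_indep n vs \<and>
                                  (\<forall>v\<in>set vs. F (rvec v) \<le> \<mu>))}"
  define \<mu>\<^sub>0 where "\<mu>\<^sub>0 = Max (insert 1 ((\<lambda>v. F (rvec v)) ` set (unit_vecs n)))"
  have "1 \<le> \<mu>\<^sub>0" and "\<forall>v\<in>set (unit_vecs n). F (rvec v) \<le> \<mu>\<^sub>0"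
    by (simp_all add: \<mu>\<^sub>0_def)
  then have "\<mu>\<^sub>0 \<in> ?S"
    using lin_indep_unit_vecs unit_vecs_bounded(1) by (auto intro!: exI[of _ "unit_vecs n"])
  moreover have "b \<le> \<mu>" if "\<mu> \<in> ?S" for \<mu>
    using that assms by force
  ultimately show ?thesis
    unfolding succ_min_def by (intro cInf_greatest) auto
qed

theorem lemma5p2:
  fixes n m :: nat and \<alpha> :: "nat \<Rightarrow> real"
  assumes "Q_lin_indep_alpha n \<alpha>"
    and "m \<ge> 1"
  shows "succ_min n (G_norm n \<alpha> m) (n+1) \<ge> real m"
proof -
  let ?ws = "mink_rows n \<alpha> m n"
  obtain w where w: "mink_next n \<alpha> m ?ws w" and \<beta>: "mink_beta n \<alpha> m (n + 1) = xi n \<alpha> (rvec w)"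
    using mink_beta_last[OF assms(2)] by blast
  have ws: "length ?ws = n" "lin_indep n ?ws"
    using mink_rows_lin_indep[OF assms(2), of n n \<alpha>] by auto
  obtain j where "j \<le> n" and "w j > 0"
    using w by (auto simp: mink_next_def first_nonzero_pos_def)
  then have nz: "xi n \<alpha> (rvec w) \<noteq> 0"
    using xi_rvec_nonzero[OF assms(1)] by force
  show ?thesis
  proof (rule succ_min_top_ge)
    fix vs assume "length vs = n + 1" "set vs \<subseteq> zvecs n" "lin_indep n vs"
    then obtain u where "u \<in> set vs" "u \<in> zvecs n" "lin_indep n (?ws @ [u])"
      using lin_indep_extend[OF ws(2)] ws(1) by fastforce
    then show "\<exists>v\<in>set vs. real m \<le> G_norm n \<alpha> m (rvec v)"
      using mink_next_completion_ge[OF w nz] \<beta> by (auto simp: G_norm_def)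
  qed
qed

end
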